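(* Let $G$ be a hypo-efficient domination graph that is also a vertex domination-critical graph. Then for every vertex $v\in V(G)$, the graph $G-v$ has exactly one efficient dominating set. If in addition $G$ is regular, then $G$ is a hypo-unique domination graph.
   Context: All graphs are finite, simple and undirected. For $v\in V(G)$, $N[v]$ is the closed neighborhood of $v$. A set $D\subseteq V(G)$ is dominating if every vertex of $G$ not in $D$ has a neighbor in $D$; $\gamma(G)$ is the minimum size of a dominating set, and a dominating set of size $\gamma(G)$ is a $\gamma$-set. A vertex $v$ is $\gamma$-critical if $\gamma(G-v)<\gamma(G)$; $G$ is a vertex domination-critical graph if every vertex is $\gamma$-critical. A set $D\subseteq V(H)$ is an efficient dominating set (EDS) of $H$ if $|N_H[v]\cap D|=1$ for every $v\in V(H)$. $G$ is a hypo-efficient domination graph if $G$ has no EDS but $G-v$ has at least one EDS for every $v\in V(G)$. $G$ is a hypo-unique domination graph if $G$ has at least two $\gamma$-sets but $G-v$ has exactly one $\gamma$-set for every $v\in V(G)$. *)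

theory Defs
  imports Main
begin

definition graph :: "'a set \<Rightarrow> ('a \<Rightarrow> 'a \<Rightarrow> bool) \<Rightarrow> bool" where
  "graph V E \<longleftrightarrow> finite V \<and> (\<forall>u v. E u v \<longrightarrow> u \<in> V \<and> v \<in> V) \<and>
     (\<forall>u v. E u v \<longrightarrow> E v u) \<and> (\<forall>v. \<not> E v v)"

definition del_vertex :: "('a \<Rightarrow> 'a \<Rightarrow> bool) \<Rightarrow> 'a \<Rightarrow> 'a \<Rightarrow> 'a \<Rightarrow> bool" where
  "del_vertex E v = (\<lambda>x y. E x y \<and> x \<noteq> v \<and> y \<noteq> v)"

definition closed_nbhd :: "'a set \<Rightarrow> ('a \<Rightarrow> 'a \<Rightarrow> bool) \<Rightarrow> 'a \<Rightarrow> 'a set" where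
  "closed_nbhd V E v = {u \<in> V. u = v \<or> E v u}"

definition degree :: "'a set \<Rightarrow> ('a \<Rightarrow> 'a \<Rightarrow> bool) \<Rightarrow> 'a \<Rightarrow> nat" where
  "degree V E v = card {u \<in> V. E v u}"

definition regular :: "'a set \<Rightarrow> ('a \<Rightarrow> 'a \<Rightarrow> bool) \<Rightarrow> bool" where
  "regular V E \<longleftrightarrow> (\<exists>k. \<forall>v\<in>V. degree V E v = k)"

definition dominating :: "'a set \<Rightarrow> ('a \<Rightarrow> 'a \<Rightarrow> bool) \<Rightarrow> 'a set \<Rightarrow> bool" where
  "dominating V E D \<longleftrightarrow> D \<subseteq> V \<and> (\<forall>v\<in>V - D. \<exists>u\<in>D. E v u)"

definition domination_number :: "'a set \<Rightarrow> ('a \<Rightarrow> 'a \<Rightarrow> bool) \<Rightarrow> nat" where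
  "domination_number V E = (LEAST k. \<exists>D. dominating V E D \<and> card D = k)"

definition gamma_set :: "'a set \<Rightarrow> ('a \<Rightarrow> 'a \<Rightarrow> bool) \<Rightarrow> 'a set \<Rightarrow> bool" where
  "gamma_set V E D \<longleftrightarrow> dominating V E D \<and> card D = domination_number V E"

definition vertex_domination_critical :: "'a set \<Rightarrow> ('a \<Rightarrow> 'a \<Rightarrow> bool) \<Rightarrow> bool" where
  "vertex_domination_critical V E \<longleftrightarrow>
     (\<forall>v\<in>V. domination_number (V - {v}) (del_vertex E v) < domination_number V E)"

definition efficient_dominating :: "'a set \<Rightarrow> ('a \<Rightarrow> 'a \<Rightarrow> bool) \<Rightarrow> 'a set \<Rightarrow> bool" where
  "efficient_dominating V E D \<longleftrightarrow> D \<subseteq> V \<and> (\<forall>v\<in>V. card (closed_nbhd V E v \<inter> D) = 1)"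

definition hypo_efficient :: "'a set \<Rightarrow> ('a \<Rightarrow> 'a \<Rightarrow> bool) \<Rightarrow> bool" where
  "hypo_efficient V E \<longleftrightarrow> \<not> (\<exists>D. efficient_dominating V E D) \<and>
     (\<forall>v\<in>V. \<exists>D. efficient_dominating (V - {v}) (del_vertex E v) D)"

definition hypo_unique :: "'a set \<Rightarrow> ('a \<Rightarrow> 'a \<Rightarrow> bool) \<Rightarrow> bool" where
  "hypo_unique V E \<longleftrightarrow> (\<exists>D1 D2. D1 \<noteq> D2 \<and> gamma_set V E D1 \<and> gamma_set V E D2) \<and>
     (\<forall>v\<in>V. \<exists>!D. gamma_set (V - {v}) (del_vertex E v) D)"

end

theory Submission
  imports Defs
begin

text \<open>Let \<open>N\<close> be the closed neighbourhood matrix of \<open>G\<close>. In a vertex-critical graph an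
  efficient dominating set \<open>D\<close> of \<open>G - w\<close> cannot dominate \<open>w\<close>, so \<open>N \<chi>\<^sub>D = 1 - e\<^sub>w\<close>.
  For two such sets the difference \<open>y\<close> of their characteristic vectors lies in the kernel of the
  symmetric matrix \<open>N\<close>; pairing it with the characteristic vectors of efficient dominating
  sets of all the \<open>G - u\<close> shows that \<open>y\<close> is constant, and a constant kernel vector is zero
  as soon as \<open>|V| \<ge> 2\<close>.
  Efficient dominating sets are minimum dominating sets; if \<open>G\<close> is regular, a double count shows
  that every \<open>\<gamma>\<close>-set of \<open>G - v\<close> is efficient, hence unique. Adding \<open>v\<close>, resp.\ a neighbour
  \<open>w\<close> of \<open>v\<close>, to the efficient dominating set of \<open>G - v\<close>, resp.\ \<open>G - w\<close>, gives two distinct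
  \<open>\<gamma>\<close>-sets of \<open>G\<close>.\<close>

lemma graph_del_vertex: "graph V E \<Longrightarrow> graph (V - {v}) (del_vertex E v)"
  by (auto simp: graph_def del_vertex_def)

lemma graph_finite_subset: "graph V E \<Longrightarrow> X \<subseteq> V \<Longrightarrow> finite X"
  unfolding graph_def using finite_subset by blast

lemma closed_nbhd_subset: "closed_nbhd V E u \<subseteq> V"
  by (auto simp: closed_nbhd_def)

lemma finite_closed_nbhd: "finite V \<Longrightarrow> finite (closed_nbhd V E u)"
  using closed_nbhd_subset by (rule finite_subset)

lemma closed_nbhd_del_vertex:
  "u \<noteq> v \<Longrightarrow> closed_nbhd (V - {v}) (del_vertex E v) u = closed_nbhd V E u - {v}"
  by (auto simp: closed_nbhd_def del_vertex_def)

lemma card_closed_nbhd: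
  assumes "graph V E" "u \<in> V"
  shows "card (closed_nbhd V E u) = Suc (degree V E u)"
proof -
  have "closed_nbhd V E u = insert u {z \<in> V. E u z}" "u \<notin> {z \<in> V. E u z}"
    using assms by (auto simp: closed_nbhd_def graph_def)
  then show ?thesis
    using assms(1) by (simp add: degree_def graph_def)
qed

lemma sum_closed_nbhd_swap:
  fixes f :: "'a \<Rightarrow> 'b::comm_semiring_1"
  assumes g: "graph V E" and X: "X \<subseteq> V"
  shows "(\<Sum>u\<in>X. \<Sum>z\<in>closed_nbhd V E u. f z)
       = (\<Sum>z\<in>V. f z * of_nat (card (closed_nbhd V E z \<inter> X)))"
proof -
  have fin: "finite V" "finite X"
    using graph_finite_subset[OF g] X by auto
  have "closed_nbhd V E u = {z \<in> V. u \<in> closed_nbhd V E z}" for u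
    using g by (auto simp: closed_nbhd_def graph_def)
  then have "(\<Sum>u\<in>X. \<Sum>z\<in>closed_nbhd V E u. f z)
      = (\<Sum>u\<in>X. \<Sum>z\<in>{z \<in> V. u \<in> closed_nbhd V E z}. f z)"
    by (intro sum.cong refl arg_cong[where f = "sum f"])
  also have "\<dots> = (\<Sum>z\<in>V. \<Sum>u\<in>{u \<in> X. u \<in> closed_nbhd V E z}. f z)"
    by (rule sum.swap_restrict[OF fin(2,1)])
  also have "\<dots> = (\<Sum>z\<in>V. f z * of_nat (card (closed_nbhd V E z \<inter> X)))"
    by (intro sum.cong refl) (simp add: Int_def conj_commute mult.commute)
  finally show ?thesis .
qed

lemma sum_card_closed_nbhd_Int_swap:
  assumes g: "graph V E" and "X \<subseteq> V" "Y \<subseteq> V"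
  shows "(\<Sum>u\<in>X. card (closed_nbhd V E u \<inter> Y)) = (\<Sum>z\<in>Y. card (closed_nbhd V E z \<inter> X))"
proof -
  have fin: "finite V" using g by (simp add: graph_def)
  have "(\<Sum>u\<in>X. card (closed_nbhd V E u \<inter> Y)) = (\<Sum>u\<in>X. \<Sum>z\<in>closed_nbhd V E u. of_bool (z \<in> Y))"
    using finite_closed_nbhd[OF fin] by (simp add: Int_def)
  also have "\<dots> = (\<Sum>z\<in>V. of_bool (z \<in> Y) * of_nat (card (closed_nbhd V E z \<inter> X)))"
    by (rule sum_closed_nbhd_swap[OF g \<open>X \<subseteq> V\<close>])
  also have "\<dots> = (\<Sum>z\<in>Y. card (closed_nbhd V E z \<inter> X))"
    using fin \<open>Y \<subseteq> V\<close> by (simp add: mult.commute Int_absorb1 Int_commute)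
  finally show ?thesis .
qed

lemma dominating_iff_closed_nbhd_Int:
  "dominating V E D \<longleftrightarrow> D \<subseteq> V \<and> (\<forall>v\<in>V. closed_nbhd V E v \<inter> D \<noteq> {})"
  by (auto simp: dominating_def closed_nbhd_def)

lemma efficient_dominating_imp_dominating:
  "efficient_dominating V E D \<Longrightarrow> dominating V E D"
  by (fastforce simp: efficient_dominating_def dominating_iff_closed_nbhd_Int)

lemma domination_number_le: "dominating V E D \<Longrightarrow> domination_number V E \<le> card D"
  unfolding domination_number_def by (rule Least_le) blast

lemma ex_gamma_set: "\<exists>D. gamma_set V E D"
proof -
  have "\<exists>k D. dominating V E D \<and> card D = k"
    by (auto simp: dominating_def)
  then have "\<exists>D. dominating V E D \<and> card D = domination_number V E"
    unfolding domination_number_def by (rule LeastI_ex)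
  then show ?thesis
    by (simp add: gamma_set_def)
qed

lemma efficient_dominating_card_le:
  assumes g: "graph V E" and D: "efficient_dominating V E D" and S: "dominating V E S"
  shows "card D \<le> card S"
proof -
  have DV: "D \<subseteq> V" and SV: "S \<subseteq> V"
    using D S by (auto simp: efficient_dominating_def dominating_def)
  have "finite S"
    using graph_finite_subset[OF g] SV by simp
  have "card D = (\<Sum>d\<in>D. 1)"
    by simp
  also have "\<dots> \<le> (\<Sum>d\<in>D. card (closed_nbhd V E d \<inter> S))"
  proof (rule sum_mono)
    fix d assume "d \<in> D"
    then have "closed_nbhd V E d \<inter> S \<noteq> {}"
      using S DV by (auto simp: dominating_iff_closed_nbhd_Int)
    then show "1 \<le> card (closed_nbhd V E d \<inter> S)"
      using \<open>finite S\<close> by (simp add: Suc_le_eq card_gt_0_iff)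
  qed
  also have "\<dots> = (\<Sum>s\<in>S. card (closed_nbhd V E s \<inter> D))"
    by (rule sum_card_closed_nbhd_Int_swap[OF g DV SV])
  also have "\<dots> = (\<Sum>s\<in>S. 1)"
    using D SV by (intro sum.cong) (auto simp: efficient_dominating_def)
  also have "\<dots> = card S"
    by simp
  finally show ?thesis .
qed

lemma efficient_dominating_imp_gamma_set:
  assumes "graph V E" "efficient_dominating V E D"
  shows "gamma_set V E D"
proof -
  obtain S where "gamma_set V E S"
    using ex_gamma_set by blast
  then show ?thesis
    using assms efficient_dominating_card_le efficient_dominating_imp_dominating
      domination_number_le
    by (fastforce simp: gamma_set_def)
qed

lemma dominating_insert_del_vertex:
  assumes "v \<in> V" "dominating (V - {v}) (del_vertex E v) D"
  shows "dominating V E (insert v D)"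
  using assms by (auto simp: dominating_def del_vertex_def)

lemma vertex_critical_domination_number_del_vertex:
  assumes g: "graph V E" and c: "vertex_domination_critical V E" and v: "v \<in> V"
  shows "domination_number V E = Suc (domination_number (V - {v}) (del_vertex E v))"
proof -
  obtain D where D: "gamma_set (V - {v}) (del_vertex E v) D"
    using ex_gamma_set by blast
  then have "finite D"
    using graph_finite_subset[OF g] by (auto simp: gamma_set_def dominating_def)
  then have "card (insert v D) \<le> Suc (card D)"
    by (simp add: card_insert_le_m1)
  moreover have "domination_number V E \<le> card (insert v D)"
    using D v by (auto simp: gamma_set_def intro: domination_number_le dominating_insert_del_vertex)
  moreover have "domination_number (V - {v}) (del_vertex E v) < domination_number V E"
    using c v by (simp add: vertex_domination_critical_def)
  ultimately show ?thesis
    using D by (simp add: gamma_set_def)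
qed

lemma vertex_critical_gamma_set_insert:
  assumes g: "graph V E" and c: "vertex_domination_critical V E" and v: "v \<in> V"
    and D: "gamma_set (V - {v}) (del_vertex E v) D"
  shows "gamma_set V E (insert v D)"
proof -
  have "D \<subseteq> V - {v}"
    using D by (simp add: gamma_set_def dominating_def)
  then have "finite D" "v \<notin> D"
    using graph_finite_subset[OF g] by auto
  then have "card (insert v D) = Suc (card D)"
    by simp
  then have "card (insert v D) = domination_number V E"
    using D vertex_critical_domination_number_del_vertex[OF g c v] by (simp add: gamma_set_def)
  then show ?thesis
    using D v by (simp add: gamma_set_def dominating_insert_del_vertex)
qed

definition efficient_dominating_except :: "'a set \<Rightarrow> ('a \<Rightarrow> 'a \<Rightarrow> bool) \<Rightarrow> 'a \<Rightarrow> 'a set \<Rightarrow> bool" where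
  "efficient_dominating_except V E w D \<longleftrightarrow>
     D \<subseteq> V \<and> (\<forall>u\<in>V. card (closed_nbhd V E u \<inter> D) = (if u = w then 0 else 1))"

lemma vertex_critical_efficient_dominating_del_vertex:
  assumes g: "graph V E" and c: "vertex_domination_critical V E" and w: "w \<in> V"
    and D: "efficient_dominating (V - {w}) (del_vertex E w) D"
  shows "efficient_dominating_except V E w D"
proof -
  have DV: "D \<subseteq> V - {w}"
    using D by (simp add: efficient_dominating_def)
  have nbhd_eq: "closed_nbhd V E u \<inter> D = closed_nbhd (V - {w}) (del_vertex E w) u \<inter> D"
    if "u \<noteq> w" for u
    using closed_nbhd_del_vertex[OF that] DV by blast
  have "closed_nbhd V E w \<inter> D = {}"
  proof (rule ccontr)
    assume w_dominated: "closed_nbhd V E w \<inter> D \<noteq> {}"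
    have "closed_nbhd V E u \<inter> D \<noteq> {}" if "u \<in> V" for u
      using w_dominated nbhd_eq efficient_dominating_imp_dominating[OF D] that
      by (cases "u = w") (auto simp: dominating_iff_closed_nbhd_Int)
    then have "dominating V E D"
      using DV by (auto simp: dominating_iff_closed_nbhd_Int)
    then have "domination_number V E \<le> card D"
      by (rule domination_number_le)
    moreover have "card D = domination_number (V - {w}) (del_vertex E w)"
      using efficient_dominating_imp_gamma_set[OF graph_del_vertex[OF g] D]
      by (simp add: gamma_set_def)
    ultimately show False
      using vertex_critical_domination_number_del_vertex[OF g c w] by simp
  qed
  then show ?thesis
    using D DV nbhd_eq by (auto simp: efficient_dominating_except_def efficient_dominating_def)
qed

lemma no_efficient_dominating_imp_edge:
  assumes "\<nexists>D. efficient_dominating V E D"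
  shows "\<exists>v\<in>V. \<exists>w. E v w"
proof (rule ccontr)
  assume "\<not> (\<exists>v\<in>V. \<exists>w. E v w)"
  then have "closed_nbhd V E v \<inter> V = {v}" if "v \<in> V" for v
    using that by (auto simp: closed_nbhd_def)
  then have "efficient_dominating V E V"
    by (simp add: efficient_dominating_def)
  then show False
    using assms by blast
qed

text \<open>Summing the hypothesis over \<open>D\<^sub>w\<close> and swapping the sums gives \<open>(\<Sum>V y) - y w = 0\<close>,
  so \<open>y\<close> is a constant \<open>T\<close> with \<open>T = |V| T\<close>.\<close>

lemma closed_nbhd_sums_zero_imp_zero:
  fixes y :: "'a \<Rightarrow> 'b::{idom, ring_char_0}"
  assumes g: "graph V E" and V2: "2 \<le> card V"
    and except: "\<And>w. w \<in> V \<Longrightarrow> \<exists>D. efficient_dominating_except V E w D"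
    and zero: "\<And>u. u \<in> V \<Longrightarrow> (\<Sum>z\<in>closed_nbhd V E u. y z) = 0"
    and z: "z \<in> V"
  shows "y z = 0"
proof -
  have fin: "finite V"
    using g by (simp add: graph_def)
  define T where "T = (\<Sum>z\<in>V. y z)"
  have const: "y w = T" if w: "w \<in> V" for w
  proof -
    obtain D where D: "efficient_dominating_except V E w D"
      using except w by blast
    have DV: "D \<subseteq> V"
      using D by (simp add: efficient_dominating_except_def)
    have "0 = (\<Sum>u\<in>D. \<Sum>z\<in>closed_nbhd V E u. y z)"
      using zero DV by (simp add: subset_iff)
    also have "\<dots> = (\<Sum>z\<in>V. y z * of_nat (card (closed_nbhd V E z \<inter> D)))"
      by (rule sum_closed_nbhd_swap[OF g DV])
    also have "\<dots> = (\<Sum>z\<in>V - {w}. y z)"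
      using D by (simp add: sum.remove[OF fin w] efficient_dominating_except_def)
    also have "\<dots> = T - y w"
      using fin w by (simp add: T_def sum_diff1)
    finally show ?thesis
      by simp
  qed
  have "T = (\<Sum>z\<in>V. y z)"
    by (fact T_def)
  also have "\<dots> = (\<Sum>z\<in>V. T)"
    using const by (rule sum.cong[OF refl])
  finally have "(of_nat (card V) - 1) * T = 0"
    by (simp add: algebra_simps)
  moreover have "of_nat (card V) - 1 \<noteq> (0::'b)"
    using V2 by simp
  ultimately show ?thesis
    using const[OF z] by simp
qed

lemma efficient_dominating_except_unique:
  assumes g: "graph V E" and V2: "2 \<le> card V"
    and except: "\<And>w. w \<in> V \<Longrightarrow> \<exists>D. efficient_dominating_except V E w D"
    and D1: "efficient_dominating_except V E v D1"
    and D2: "efficient_dominating_except V E v D2"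
  shows "D1 = D2"
proof -
  define y :: "'a \<Rightarrow> int" where "y z = of_bool (z \<in> D1) - of_bool (z \<in> D2)" for z
  have "(\<Sum>z\<in>closed_nbhd V E u. y z) = 0" if "u \<in> V" for u
    using D1 D2 that finite_closed_nbhd[of V E u] g
    by (simp add: y_def sum_subtractf Int_def efficient_dominating_except_def graph_def)
  then have y_zero: "y z = 0" if "z \<in> V" for z
    using closed_nbhd_sums_zero_imp_zero[OF g V2 except] that by blast
  have "z \<in> D1 \<longleftrightarrow> z \<in> D2" if "z \<in> V" for z
    using y_zero[OF that] by (auto simp: y_def of_bool_def split: if_splits)
  moreover have "D1 \<subseteq> V" "D2 \<subseteq> V"
    using D1 D2 by (simp_all add: efficient_dominating_except_def)
  ultimately show ?thesis
    by blast
qed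

text \<open>In a \<open>k\<close>-regular graph the closed neighbourhoods of \<open>S\<close> in \<open>G - v\<close> have at most
  \<open>|S| (k + 1) \<le> |D| (k + 1) = |V| - 1\<close> incidences, yet they cover all \<open>|V| - 1\<close> vertices.\<close>

lemma regular_dominating_del_vertex_efficient:
  assumes g: "graph V E" and k: "\<And>u. u \<in> V \<Longrightarrow> degree V E u = k" and v: "v \<in> V"
    and D: "efficient_dominating_except V E v D"
    and S: "dominating (V - {v}) (del_vertex E v) S" and card_S: "card S \<le> card D"
  shows "efficient_dominating (V - {v}) (del_vertex E v) S"
proof -
  let ?V = "V - {v}" and ?E = "del_vertex E v"
  have fin: "finite V"
    using g by (simp add: graph_def)
  have DV: "D \<subseteq> V" and SV: "S \<subseteq> ?V"
    using D S by (auto simp: efficient_dominating_except_def dominating_def)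
  have ge_1: "1 \<le> card (closed_nbhd ?V ?E u \<inter> S)" if "u \<in> ?V" for u
    using S that finite_closed_nbhd[of ?V ?E u] fin
    by (auto simp: dominating_iff_closed_nbhd_Int Suc_le_eq card_gt_0_iff)
  have "(\<Sum>u\<in>?V. card (closed_nbhd ?V ?E u \<inter> S)) = (\<Sum>s\<in>S. card (closed_nbhd ?V ?E s \<inter> ?V))"
    by (rule sum_card_closed_nbhd_Int_swap[OF graph_del_vertex[OF g] subset_refl SV])
  also have "\<dots> \<le> (\<Sum>s\<in>S. card (closed_nbhd V E s \<inter> V))"
    using SV fin closed_nbhd_del_vertex[of _ v V E]
    by (intro sum_mono card_mono) (auto simp: finite_closed_nbhd)
  also have "\<dots> = (\<Sum>s\<in>S. Suc k)"
    using SV g k by (intro sum.cong) (auto simp: Int_absorb2 closed_nbhd_subset card_closed_nbhd)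
  also have "\<dots> \<le> (\<Sum>d\<in>D. Suc k)"
    using card_S by (simp add: mult_le_mono1 del: mult_Suc_right)
  also have "\<dots> = (\<Sum>d\<in>D. card (closed_nbhd V E d \<inter> V))"
    using DV g k by (intro sum.cong) (auto simp: Int_absorb2 closed_nbhd_subset card_closed_nbhd)
  also have "\<dots> = (\<Sum>z\<in>V. card (closed_nbhd V E z \<inter> D))"
    by (rule sum_card_closed_nbhd_Int_swap[OF g DV subset_refl])
  also have "\<dots> = (\<Sum>u\<in>?V. 1)"
    using D fin v by (simp add: sum.remove[OF fin v] efficient_dominating_except_def)
  finally have total: "(\<Sum>u\<in>?V. card (closed_nbhd ?V ?E u \<inter> S)) = (\<Sum>u\<in>?V. 1)"
    using sum_mono[of ?V "\<lambda>_. 1", OF ge_1] by (rule order_antisym)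
  then have "card (closed_nbhd ?V ?E u \<inter> S) = 1" if "u \<in> ?V" for u
    using sum_mono_inv[OF total[symmetric] ge_1 that] fin by simp
  then show ?thesis
    using SV by (simp add: efficient_dominating_def)
qed

lemma hypo_efficient_ex_edge:
  assumes "hypo_efficient V E"
  obtains a b where "a \<in> V" "E a b"
proof -
  have "\<nexists>D. efficient_dominating V E D"
    using assms by (simp add: hypo_efficient_def)
  then show thesis
    using no_efficient_dominating_imp_edge that by blast
qed

lemma hypo_efficient_card_ge_2:
  assumes g: "graph V E" and "hypo_efficient V E"
  shows "2 \<le> card V"
proof -
  obtain a b where "a \<in> V" "E a b"
    using hypo_efficient_ex_edge[OF assms(2)] .
  then have "{a, b} \<subseteq> V" "a \<noteq> b" "finite V"
    using g by (auto simp: graph_def)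
  then show ?thesis
    using card_mono[of V "{a, b}"] by simp
qed

lemma hypo_efficient_critical_efficient_dominating_unique:
  assumes g: "graph V E" and h: "hypo_efficient V E" and c: "vertex_domination_critical V E"
    and v: "v \<in> V"
    and D1: "efficient_dominating (V - {v}) (del_vertex E v) D1"
    and D2: "efficient_dominating (V - {v}) (del_vertex E v) D2"
  shows "D1 = D2"
proof (rule efficient_dominating_except_unique[OF g hypo_efficient_card_ge_2[OF g h]])
  fix w assume w: "w \<in> V"
  then obtain D where "efficient_dominating (V - {w}) (del_vertex E w) D"
    using h by (auto simp: hypo_efficient_def)
  then show "\<exists>D. efficient_dominating_except V E w D"
    using vertex_critical_efficient_dominating_del_vertex[OF g c w] by blast
qed (fact vertex_critical_efficient_dominating_del_vertex[OF g c v D1]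
      vertex_critical_efficient_dominating_del_vertex[OF g c v D2])+

lemma hypo_efficient_critical_two_gamma_sets:
  assumes g: "graph V E" and h: "hypo_efficient V E" and c: "vertex_domination_critical V E"
  shows "\<exists>D1 D2. D1 \<noteq> D2 \<and> gamma_set V E D1 \<and> gamma_set V E D2"
proof -
  obtain a b where ab: "a \<in> V" "E a b"
    using hypo_efficient_ex_edge[OF h] .
  then have "b \<in> V" "a \<noteq> b"
    using g by (auto simp: graph_def)
  obtain Da where Da: "efficient_dominating (V - {a}) (del_vertex E a) Da"
    using h ab by (auto simp: hypo_efficient_def)
  obtain Db where Db: "efficient_dominating (V - {b}) (del_vertex E b) Db"
    using h \<open>b \<in> V\<close> by (auto simp: hypo_efficient_def)
  have "card (closed_nbhd V E a \<inter> Da) = 0"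
    using vertex_critical_efficient_dominating_del_vertex[OF g c \<open>a \<in> V\<close> Da] \<open>a \<in> V\<close>
    by (simp add: efficient_dominating_except_def)
  moreover have "finite (closed_nbhd V E a)"
    using g by (simp add: graph_def finite_closed_nbhd)
  ultimately have "closed_nbhd V E a \<inter> Da = {}"
    by simp
  then have "b \<notin> Da"
    using ab \<open>b \<in> V\<close> by (auto simp: closed_nbhd_def)
  then have "b \<notin> insert a Da"
    using \<open>a \<noteq> b\<close> by simp
  then have "insert a Da \<noteq> insert b Db"
    by auto
  moreover have "gamma_set V E (insert a Da)" "gamma_set V E (insert b Db)"
    using vertex_critical_gamma_set_insert[OF g c \<open>a \<in> V\<close>]
      vertex_critical_gamma_set_insert[OF g c \<open>b \<in> V\<close>]
      efficient_dominating_imp_gamma_set[OF graph_del_vertex[OF g] Da]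
      efficient_dominating_imp_gamma_set[OF graph_del_vertex[OF g] Db]
    by simp_all
  ultimately show ?thesis
    by (intro exI[of _ "insert a Da"] exI[of _ "insert b Db"] conjI)
qed

lemma regular_hypo_efficient_critical_gamma_set_del_vertex_unique:
  assumes g: "graph V E" and h: "hypo_efficient V E" and c: "vertex_domination_critical V E"
    and r: "regular V E" and v: "v \<in> V"
  shows "\<exists>!S. gamma_set (V - {v}) (del_vertex E v) S"
proof -
  obtain k where k: "\<And>u. u \<in> V \<Longrightarrow> degree V E u = k"
    using r by (auto simp: regular_def)
  obtain D where D: "efficient_dominating (V - {v}) (del_vertex E v) D"
    using h v by (auto simp: hypo_efficient_def)
  have gamma_D: "gamma_set (V - {v}) (del_vertex E v) D"
    using efficient_dominating_imp_gamma_set[OF graph_del_vertex[OF g] D] .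
  have "S = D" if S: "gamma_set (V - {v}) (del_vertex E v) S" for S
  proof (rule hypo_efficient_critical_efficient_dominating_unique[OF g h c v _ D])
    show "efficient_dominating (V - {v}) (del_vertex E v) S"
      using regular_dominating_del_vertex_efficient[OF g k v
          vertex_critical_efficient_dominating_del_vertex[OF g c v D]] S gamma_D
      by (simp add: gamma_set_def)
  qed
  then show ?thesis
    using gamma_D by blast
qed

theorem theorem3p15:
  fixes V :: "'a set" and E :: "'a \<Rightarrow> 'a \<Rightarrow> bool"
  assumes "graph V E"
    and "hypo_efficient V E"
    and "vertex_domination_critical V E"
  shows "(\<forall>v\<in>V. \<exists>!D. efficient_dominating (V - {v}) (del_vertex E v) D)
       \<and> (regular V E \<longrightarrow> hypo_unique V E)"
proof (intro conjI ballI impI)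
  fix v assume v: "v \<in> V"
  then obtain D where "efficient_dominating (V - {v}) (del_vertex E v) D"
    using assms(2) by (auto simp: hypo_efficient_def)
  then show "\<exists>!D. efficient_dominating (V - {v}) (del_vertex E v) D"
    using hypo_efficient_critical_efficient_dominating_unique[OF assms v] by blast
next
  assume "regular V E"
  then show "hypo_unique V E"
    unfolding hypo_unique_def
    using hypo_efficient_critical_two_gamma_sets[OF assms]
      regular_hypo_efficient_critical_gamma_set_del_vertex_unique[OF assms]
    by blast
qed

end
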